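(* Let $k\ge2$ and $n\ge1$, and let $h_k(x_1,\dots,x_n)=\sum_{|J|=k}x^J$ be the complete homogeneous symmetric polynomial of degree $k$. Then the polynomials $\partial h_k/\partial x_i$, $i=1,\dots,n$, have no common zero in $\mathbb{C}^n\setminus\{0\}$. *)

theory Defs
  imports "HOL-Analysis.Analysis"
begin

text \<open>Points of C^n are represented as functions nat \<Rightarrow> complex; only the
  coordinates 0..n-1 are used. Multi-indices J are exponent vectors supported in {0..<n}.\<close>

definition multi_indices :: "nat \<Rightarrow> nat \<Rightarrow> (nat \<Rightarrow> nat) set" where
  "multi_indices n k = {J. (\<forall>i. n \<le> i \<longrightarrow> J i = 0) \<and> (\<Sum>i<n. J i) = k}"

definition hcomplete :: "nat \<Rightarrow> nat \<Rightarrow> (nat \<Rightarrow> complex) \<Rightarrow> complex" where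
  "hcomplete n k x = (\<Sum>J\<in>multi_indices n k. \<Prod>i<n. x i ^ J i)"

definition partial_deriv :: "nat \<Rightarrow> ((nat \<Rightarrow> complex) \<Rightarrow> complex) \<Rightarrow> (nat \<Rightarrow> complex) \<Rightarrow> complex" where
  "partial_deriv i f x = deriv (\<lambda>t. f (x(i := t))) (x i)"

end

theory Submission
  imports Defs "HOL-Computational_Algebra.Polynomial"
begin

text \<open>Put Q(t) = \<Sum>(j < k) h_(k-1-j)(z) t^j and P(t) = \<Prod>(i < n) (t - z_i). Expanding h_k in the
  variable x_i gives \<partial>h_k/\<partial>x_i (z) = Q(z_i), and truncating the generating function identity
  (\<Sum>j h_j(z) u^j) \<Prod>i (1 - z_i u) = 1 shows that Q P = t^N + (terms of degree < n), where
  N = n + k - 1. If all partial derivatives vanish at z, every root of P is a root of Q, so P divides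
  Q P' and therefore also the Euler combination t (Q P)' - N Q P. The latter kills t^N, so it has
  degree < n = deg P and must vanish, which forces Q P = t^N. Evaluating at a coordinate z_i \<noteq> 0,
  a root of P, gives z_i^N = 0, a contradiction.\<close>

lemma finite_multi_indices: "finite (multi_indices n k)"
proof -
  have "multi_indices n k \<subseteq> {J. \<forall>i. (i \<in> {..<n} \<longrightarrow> J i \<in> {..k}) \<and> (i \<notin> {..<n} \<longrightarrow> J i = 0)}"
    by (auto simp: multi_indices_def intro: member_le_sum[of _ "{..<n}", simplified])
  then show ?thesis
    by (rule finite_subset) (rule finite_set_of_finite_funs, auto)
qed

lemma multi_indices_0: "multi_indices n 0 = {\<lambda>_. 0}"
  by (auto simp: multi_indices_def intro!: ext) (metis lessThan_iff not_less)

lemma hcomplete_0: "hcomplete n 0 x = 1"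
  by (simp add: hcomplete_def multi_indices_0)

lemma hcomplete_no_vars: "hcomplete 0 k x = (if k = 0 then 1 else 0)"
proof -
  have "multi_indices 0 k = (if k = 0 then {\<lambda>_. 0} else {})"
    by (auto simp: multi_indices_def)
  then show ?thesis by (simp add: hcomplete_def)
qed

lemma hcomplete_upd_zero:
  assumes "i < n"
  shows "hcomplete n k (x(i := 0)) = (\<Sum>J \<in> multi_indices n k \<inter> {J. J i = 0}. \<Prod>l<n. x l ^ J l)"
proof -
  have "(\<Prod>l<n. (x(i := 0)) l ^ J l) = (if J i = 0 then \<Prod>l<n. x l ^ J l else 0)" for J
    using assms by (simp add: prod.remove)
  then show ?thesis
    by (simp add: hcomplete_def sum.inter_filter[OF finite_multi_indices] Int_def)
qed

lemma hcomplete_Suc: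
  assumes "i < n"
  shows "hcomplete n (Suc k) x = hcomplete n (Suc k) (x(i := 0)) + x i * hcomplete n k x"
proof -
  define raise :: "(nat \<Rightarrow> nat) \<Rightarrow> nat \<Rightarrow> nat" where "raise J = J(i := Suc (J i))" for J
  have sum_upd: "(\<Sum>l<n. (J(i := v)) l) = v + (\<Sum>l\<in>{..<n} - {i}. J l)"
    and sum_remove: "(\<Sum>l<n. J l) = J i + (\<Sum>l\<in>{..<n} - {i}. J l)" for J :: "nat \<Rightarrow> nat" and v
    using assms by (simp_all add: sum.remove)
  have "multi_indices n (Suc k) - {J. J i = 0} = raise ` multi_indices n k"
  proof (intro equalityI subsetI)
    fix J assume J: "J \<in> multi_indices n (Suc k) - {J. J i = 0}"
    then have "J = raise (J(i := J i - 1))" "J(i := J i - 1) \<in> multi_indices n k"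
      using assms sum_upd[of J] sum_remove[of J] by (auto simp: raise_def multi_indices_def)
    then show "J \<in> raise ` multi_indices n k" by blast
  next
    fix J assume "J \<in> raise ` multi_indices n k"
    then show "J \<in> multi_indices n (Suc k) - {J. J i = 0}"
      using assms sum_upd sum_remove by (auto simp: raise_def multi_indices_def)
  qed
  moreover have "inj raise"
    by (rule injI) (metis raise_def fun_upd_same fun_upd_upd fun_upd_triv nat.inject)
  moreover have "(\<Prod>l<n. x l ^ raise J l) = x i * (\<Prod>l<n. x l ^ J l)" for J
    using assms by (simp add: raise_def prod.remove)
  ultimately have "(\<Sum>J \<in> multi_indices n (Suc k) - {J. J i = 0}. \<Prod>l<n. x l ^ J l)
      = x i * hcomplete n k x"
    by (simp add: sum.reindex inj_on_subset hcomplete_def sum_distrib_left)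
  then show ?thesis
    unfolding hcomplete_upd_zero[OF assms]
    using sum.Int_Diff[OF finite_multi_indices, of "\<lambda>J. \<Prod>l<n. x l ^ J l" n "Suc k" "{J. J i = 0}"]
    by (simp add: hcomplete_def)
qed

lemma hcomplete_upd_last_zero: "hcomplete (Suc m) k (x(m := 0)) = hcomplete m k x"
proof -
  have indices: "multi_indices (Suc m) k \<inter> {J. J m = 0} = multi_indices m k"
    by (auto simp: multi_indices_def less_Suc_eq_le le_less) (metis Suc_lessI)
  have "hcomplete (Suc m) k (x(m := 0))
      = (\<Sum>J \<in> multi_indices (Suc m) k \<inter> {J. J m = 0}. \<Prod>l<Suc m. x l ^ J l)"
    by (rule hcomplete_upd_zero) simp
  also have "\<dots> = (\<Sum>J \<in> multi_indices m k. \<Prod>l<m. x l ^ J l)"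
    unfolding indices by (rule sum.cong) (auto simp: multi_indices_def)
  finally show ?thesis
    by (simp add: hcomplete_def)
qed

lemma hcomplete_Suc_vars:
  "hcomplete (Suc m) (Suc k) x = hcomplete m (Suc k) x + x m * hcomplete (Suc m) k x"
  using hcomplete_Suc[of m "Suc m" k x] by (simp add: hcomplete_upd_last_zero)

lemma has_field_derivative_hcomplete:
  assumes "i < n"
  shows "((\<lambda>t. hcomplete n k (x(i := t))) has_field_derivative
           (\<Sum>j<k. t ^ j * hcomplete n (k - 1 - j) (x(i := t)))) (at t)"
proof (induction k)
  case 0
  then show ?case by (simp add: hcomplete_0)
next
  case (Suc k)
  have "(\<lambda>t. hcomplete n (Suc k) (x(i := t)))
      = (\<lambda>t. hcomplete n (Suc k) (x(i := 0)) + t * hcomplete n k (x(i := t)))"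
  proof
    fix t
    show "hcomplete n (Suc k) (x(i := t)) = hcomplete n (Suc k) (x(i := 0)) + t * hcomplete n k (x(i := t))"
      using hcomplete_Suc[OF assms, of k "x(i := t)"] by simp
  qed
  then show ?case
    by (simp only:)
      (rule DERIV_cong[OF DERIV_add[OF DERIV_const DERIV_mult'[OF DERIV_ident Suc.IH]]],
        simp add: sum.lessThan_Suc_shift sum_distrib_left mult.assoc del: sum.lessThan_Suc)
qed

definition hcomplete_poly :: "nat \<Rightarrow> nat \<Rightarrow> (nat \<Rightarrow> complex) \<Rightarrow> complex poly" where
  "hcomplete_poly n k x = (\<Sum>j\<le>k. monom (hcomplete n (k - j) x) j)"

lemma poly_hcomplete_poly: "poly (hcomplete_poly n k x) t = (\<Sum>j\<le>k. t ^ j * hcomplete n (k - j) x)"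
  by (simp add: hcomplete_poly_def poly_sum poly_monom mult.commute)

lemma coeff_hcomplete_poly:
  "coeff (hcomplete_poly n k x) j = (if j \<le> k then hcomplete n (k - j) x else 0)"
  by (simp add: hcomplete_poly_def coeff_sum coeff_monom)

lemma hcomplete_poly_0: "hcomplete_poly n 0 x = 1"
  by (simp add: hcomplete_poly_def hcomplete_0)

lemma hcomplete_poly_Suc:
  "hcomplete_poly n (Suc k) x = pCons (hcomplete n (Suc k) x) (hcomplete_poly n k x)"
  by (rule poly_eqI) (simp add: coeff_hcomplete_poly coeff_pCons split: nat.split)

lemma partial_deriv_hcomplete:
  assumes "i < n"
  shows "partial_deriv i (hcomplete n (Suc k)) x = poly (hcomplete_poly n k x) (x i)"
  unfolding partial_deriv_def
  using DERIV_imp_deriv[OF has_field_derivative_hcomplete[OF assms, of "Suc k" x "x i"]]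
  by (simp add: poly_hcomplete_poly lessThan_Suc_atMost)

lemma hcomplete_poly_mult_linear:
  "hcomplete_poly (Suc m) k x * [:- x m, 1:] = hcomplete_poly m (Suc k) x - [:hcomplete (Suc m) (Suc k) x:]"
proof (induction k)
  case 0
  then show ?case
    by (simp add: hcomplete_poly_Suc hcomplete_poly_0 hcomplete_Suc_vars hcomplete_0)
next
  case (Suc k)
  let ?h = "hcomplete (Suc m) (Suc k) x"
  have "hcomplete_poly (Suc m) (Suc k) x * [:- x m, 1:]
      = smult ?h [:- x m, 1:] + pCons 0 (hcomplete_poly m (Suc k) x - [:?h:])"
    by (simp add: hcomplete_poly_Suc[of "Suc m"] Suc.IH del: mult_pCons_right)
  also have "\<dots> = pCons (- x m * ?h) (hcomplete_poly m (Suc k) x)"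
    by (rule poly_eqI) (simp add: coeff_pCons split: nat.split)
  also have "\<dots> = hcomplete_poly m (Suc (Suc k)) x - [:hcomplete (Suc m) (Suc (Suc k)) x:]"
    by (simp add: hcomplete_poly_Suc[of m "Suc k"] hcomplete_Suc_vars[of m "Suc k"])
  finally show ?case .
qed

definition root_poly :: "nat \<Rightarrow> (nat \<Rightarrow> 'a::comm_ring_1) \<Rightarrow> 'a poly" where
  "root_poly n a = (\<Prod>i<n. [:- a i, 1:])"

lemma degree_root_poly: "degree (root_poly n (a :: nat \<Rightarrow> 'a::idom)) = n"
  unfolding root_poly_def by (subst degree_prod_eq_sum_degree) auto

lemma root_poly_neq_0: "root_poly n (a :: nat \<Rightarrow> 'a::idom) \<noteq> 0"
  by (simp add: root_poly_def)

lemma poly_root_poly_eq_0: "i < n \<Longrightarrow> poly (root_poly n a) (a i) = 0"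
  unfolding root_poly_def poly_prod by (rule prod_zero) auto

lemma root_poly_dvd_mult_pderiv:
  fixes a :: "nat \<Rightarrow> 'a::idom"
  assumes "\<forall>i<n. poly Q (a i) = 0"
  shows "root_poly n a dvd Q * pderiv (root_poly n a)"
proof -
  have "root_poly n a dvd Q * (\<Prod>l\<in>{..<n} - {i}. [:- a l, 1:])" if "i < n" for i
  proof -
    have "[:- a i, 1:] dvd Q"
      using assms that by (simp add: poly_eq_0_iff_dvd)
    then obtain R where "Q = [:- a i, 1:] * R" ..
    then have "Q * (\<Prod>l\<in>{..<n} - {i}. [:- a l, 1:]) = R * ([:- a i, 1:] * (\<Prod>l\<in>{..<n} - {i}. [:- a l, 1:]))"
      by (simp only: mult_ac)
    also have "[:- a i, 1:] * (\<Prod>l\<in>{..<n} - {i}. [:- a l, 1:]) = root_poly n a"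
      using that by (simp add: root_poly_def prod.remove del: mult_pCons_left)
    finally show ?thesis
      by simp
  qed
  then show ?thesis
    by (auto simp: root_poly_def pderiv_prod pderiv_pCons sum_distrib_left intro!: dvd_sum)
qed

lemma coeff_hcomplete_poly_mult_root_poly:
  "n \<le> j \<Longrightarrow> coeff (hcomplete_poly n k x * root_poly n x) j = (if j = n + k then 1 else 0)"
proof (induction n arbitrary: k j)
  case 0
  then show ?case
    by (auto simp: root_poly_def coeff_hcomplete_poly hcomplete_no_vars)
next
  case (Suc m)
  have "hcomplete_poly (Suc m) k x * root_poly (Suc m) x
      = (hcomplete_poly (Suc m) k x * [:- x m, 1:]) * root_poly m x"
    unfolding root_poly_def prod.lessThan_Suc by (simp only: mult_ac)
  also have "\<dots> = hcomplete_poly m (Suc k) x * root_poly m x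
      - smult (hcomplete (Suc m) (Suc k) x) (root_poly m x)"
    by (simp add: hcomplete_poly_mult_linear left_diff_distrib del: mult_pCons_right)
  finally have "hcomplete_poly (Suc m) k x * root_poly (Suc m) x
      = hcomplete_poly m (Suc k) x * root_poly m x - smult (hcomplete (Suc m) (Suc k) x) (root_poly m x)" .
  moreover have "coeff (root_poly m x) j = 0"
    using Suc.prems degree_root_poly[of m x] by (intro coeff_eq_0) auto
  ultimately show ?case
    using Suc.IH[of j "Suc k"] Suc.prems by simp
qed

lemma coeff_pCons_0_pderiv: "coeff (pCons 0 (pderiv p)) j = of_nat j * coeff p j"
  by (cases j) (simp_all add: coeff_pderiv)

lemma dvd_euler_operator_mult:
  fixes P Q :: "'a::idom poly"
  assumes "P dvd Q * pderiv P"
  shows "P dvd pCons 0 (pderiv (Q * P)) - smult c (Q * P)"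
proof -
  have "pCons 0 (pderiv (Q * P)) - smult c (Q * P)
      = [:0, 1:] * (Q * pderiv P) + P * ([:0, 1:] * pderiv Q - smult c Q)"
    by (simp add: pderiv_mult algebra_simps)
  then show ?thesis
    using dvd_mult2[OF assms, of "[:0, 1:]"] by (simp add: dvd_add)
qed

lemma eq_monom_if_dvd_euler_operator:
  fixes f P :: "'a::{idom,ring_char_0} poly"
  assumes "P \<noteq> 0" and "degree P \<le> N"
    and "P dvd pCons 0 (pderiv f) - smult (of_nat N) f"
    and "\<And>j. degree P \<le> j \<Longrightarrow> coeff f j = (if j = N then 1 else 0)"
  shows "f = monom 1 N"
proof -
  let ?g = "pCons 0 (pderiv f) - smult (of_nat N) f"
  have coeff_g: "coeff ?g j = (of_nat j - of_nat N) * coeff f j" for j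
    by (simp add: coeff_pCons_0_pderiv algebra_simps)
  have "?g = 0"
  proof (rule ccontr)
    assume g: "?g \<noteq> 0"
    with assms(3) have "degree P \<le> degree ?g"
      by (rule dvd_imp_degree_le)
    have "coeff ?g (degree ?g) = (of_nat (degree ?g) - of_nat N) * coeff f (degree ?g)"
      by (rule coeff_g)
    also have "\<dots> = 0"
      using assms(4)[OF \<open>degree P \<le> degree ?g\<close>] by simp
    finally have "coeff ?g (degree ?g) = 0" .
    with g show False
      using leading_coeff_0_iff by blast
  qed
  then have "coeff f j = 0" if "j \<noteq> N" for j
    using coeff_g[of j] that by simp
  then show ?thesis
    using assms(2,4) by (intro poly_eqI) (simp add: coeff_monom)
qed

theorem lemma15:
  fixes n k :: nat and z :: "nat \<Rightarrow> complex"
  assumes "k \<ge> 2" and "n \<ge> 1" and "\<exists>i<n. z i \<noteq> 0"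
  shows "\<exists>i<n. partial_deriv i (hcomplete n k) z \<noteq> 0"
proof (rule ccontr)
  assume no_partial_nonzero: "\<not> ?thesis"
  define Q where "Q = hcomplete_poly n (k - 1) z"
  define P where "P = root_poly n z"
  have "\<forall>i<n. poly Q (z i) = 0"
    using no_partial_nonzero assms(1) partial_deriv_hcomplete[of _ n "k - 1" z] by (simp add: Q_def)
  then have "P dvd Q * pderiv P"
    unfolding P_def by (rule root_poly_dvd_mult_pderiv)
  then have "P dvd pCons 0 (pderiv (Q * P)) - smult (of_nat (n + (k - 1))) (Q * P)"
    by (rule dvd_euler_operator_mult)
  then have QP: "Q * P = monom 1 (n + (k - 1))"
    by (intro eq_monom_if_dvd_euler_operator)
      (auto simp: P_def Q_def root_poly_neq_0 degree_root_poly coeff_hcomplete_poly_mult_root_poly)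
  obtain i where "i < n" "z i \<noteq> 0"
    using assms(3) by blast
  then have "poly (Q * P) (z i) = 0"
    by (simp add: P_def poly_root_poly_eq_0)
  with QP \<open>z i \<noteq> 0\<close> show False
    by (simp add: poly_monom)
qed

end
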